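(* Let $W\in\{\mathrm{A}_{\frac12\infty},\mathrm{D}_{\frac12\infty}\}$ and $d\ge1$. The Coxeter element $Cox^{(d)}_W$, an endomorphism of $H_{W,\mathbb{C}}$, extends to an invertible bounded operator (with bounded inverse) on $\overline H_{W,\mathbb{C}}$.
   Context: Index sets: $C_{W,0}=\{c_0^{(n)}:n\ge1\}$ (type A) or $\{c_0^{(n)}:n\ge1\}\cup\{c_0^\pm\}$ (type D); $C_{W,1}=\{c_1^{(n)}:n\ge1\}$; $C_W=C_{W,0}\sqcup C_{W,1}$; $c_0^{(n)}$ is adjacent to $c_1^{(n)}$ and $c_1^{(n+1)}$, and in type D $c_0^\pm$ are adjacent to $c_1^{(1)}$; nothing else is adjacent. $H_{W,\mathbb{C}}=\bigoplus_{c\in C_W}\mathbb{C}\gamma_c$ with $H_{W,i,\mathbb{C}}=\bigoplus_{c\in C_{W,i}}\mathbb{C}\gamma_c$, Hermitian product making $\{\gamma_c\}$ orthonormal, and $\overline H_{W,\mathbb{C}}$ its $\ell^2$-completion. $J_W$ is the bilinear form with $J_W(\gamma_c,\gamma_{c'})=1$ if $c=c'$, $-1$ if $c\in C_{W,0}$, $c'\in C_{W,1}$ adjacent, $0$ otherwise. The Coxeter element (geometrically the product $\sigma_{W,0}\circ\sigma_{W,1}$ of the monodromies around $0$ and $1$ of the fibration defined by $f_W^{(d)}$) is defined by: for $u\in H_{W,0,\mathbb{C}}$, $Cox^{(d)}_W(u)=(-1)^{d-1}\big(u+\sum_{c\in C_{W,1}}J_W(u,\gamma_c)\gamma_c-\sum_{c\in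 C_{W,1}}\sum_{e\in C_{W,0}}J_W(u,\gamma_c)J_W(\gamma_e,\gamma_c)\gamma_e\big)$; for $u\in H_{W,1,\mathbb{C}}$, $Cox^{(d)}_W(u)=(-1)^{d-1}\big(u-\sum_{c\in C_{W,0}}J_W(\gamma_c,u)\gamma_c\big)$. *)

theory Defs
  imports "HOL-Analysis.Analysis"
begin

datatype wtype = TypeA | TypeD

text \<open>Vertices: V0 n = c_0^(n), V1 n = c_1^(n) (n >= 1), Pl = c_0^+, Mi = c_0^-.\<close>
datatype vert = V0 nat | V1 nat | Pl | Mi

definition C0 :: "wtype \<Rightarrow> vert set" where
  "C0 W = {V0 n | n. n \<ge> 1} \<union> (if W = TypeD then {Pl, Mi} else {})"

definition C1 :: "wtype \<Rightarrow> vert set" where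
  "C1 W = {V1 n | n. n \<ge> 1}"

definition CW :: "wtype \<Rightarrow> vert set" where
  "CW W = C0 W \<union> C1 W"

fun adj :: "vert \<Rightarrow> vert \<Rightarrow> bool" where
  "adj (V0 n) (V1 m) = (m = n \<or> m = n + 1)"
| "adj Pl (V1 m) = (m = 1)"
| "adj Mi (V1 m) = (m = 1)"
| "adj _ _ = False"

definition Jb :: "wtype \<Rightarrow> vert \<Rightarrow> vert \<Rightarrow> complex" where
  "Jb W c c' = (if c = c' then 1
     else if c \<in> C0 W \<and> c' \<in> C1 W \<and> adj c c' then -1 else 0)"

text \<open>Vectors are functions vert => complex vanishing outside C_W.
  H_{W,C}: finitely supported such vectors; H_{W,i,C} likewise on C_{W,i}.\<close>
definition supp :: "(vert \<Rightarrow> complex) \<Rightarrow> vert set" where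
  "supp u = {c. u c \<noteq> 0}"

definition HW :: "wtype \<Rightarrow> (vert \<Rightarrow> complex) set" where
  "HW W = {u. finite (supp u) \<and> supp u \<subseteq> CW W}"

definition gam :: "vert \<Rightarrow> vert \<Rightarrow> complex" where
  "gam c = (\<lambda>x. if x = c then 1 else 0)"

definition JW :: "wtype \<Rightarrow> (vert \<Rightarrow> complex) \<Rightarrow> (vert \<Rightarrow> complex) \<Rightarrow> complex" where
  "JW W u v = (\<Sum>c\<in>supp u. \<Sum>c'\<in>supp v. u c * v c' * Jb W c c')"

definition vsum :: "'i set \<Rightarrow> ('i \<Rightarrow> vert \<Rightarrow> complex) \<Rightarrow> vert \<Rightarrow> complex" where
  "vsum S f = (\<lambda>x. \<Sum>i\<in>S. f i x)"

text \<open>Coxeter element on H_{W,0} and H_{W,1}; the sums over C_{W,i} are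
  taken over the (finitely many) indices with nonzero coefficient.\<close>
definition Cox0 :: "wtype \<Rightarrow> nat \<Rightarrow> (vert \<Rightarrow> complex) \<Rightarrow> (vert \<Rightarrow> complex)" where
  "Cox0 W d u = (\<lambda>x. (-1) ^ (d - 1) *
     (u x
      + vsum {c \<in> C1 W. JW W u (gam c) \<noteq> 0} (\<lambda>c. \<lambda>y. JW W u (gam c) * gam c y) x
      - vsum {c \<in> C1 W. JW W u (gam c) \<noteq> 0}
          (\<lambda>c. vsum {e \<in> C0 W. JW W (gam e) (gam c) \<noteq> 0}
             (\<lambda>e. \<lambda>y. JW W u (gam c) * JW W (gam e) (gam c) * gam e y)) x))"

definition Cox1 :: "wtype \<Rightarrow> nat \<Rightarrow> (vert \<Rightarrow> complex) \<Rightarrow> (vert \<Rightarrow> complex)" where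
  "Cox1 W d u = (\<lambda>x. (-1) ^ (d - 1) *
     (u x - vsum {c \<in> C0 W. JW W (gam c) u \<noteq> 0} (\<lambda>c. \<lambda>y. JW W (gam c) u * gam c y) x))"

definition restr :: "vert set \<Rightarrow> (vert \<Rightarrow> complex) \<Rightarrow> (vert \<Rightarrow> complex)" where
  "restr S u = (\<lambda>x. if x \<in> S then u x else 0)"

text \<open>Cox^{(d)}_W on H_{W,C} = H_{W,0,C} \<oplus> H_{W,1,C}, extended linearly.\<close>
definition Cox :: "wtype \<Rightarrow> nat \<Rightarrow> (vert \<Rightarrow> complex) \<Rightarrow> (vert \<Rightarrow> complex)" where
  "Cox W d u = (\<lambda>x. Cox0 W d (restr (C0 W) u) x + Cox1 W d (restr (C1 W) u) x)"

text \<open>The l^2 completion of H_{W,C} and its norm.\<close>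
definition l2 :: "wtype \<Rightarrow> (vert \<Rightarrow> complex) set" where
  "l2 W = {f. supp f \<subseteq> CW W \<and> (\<lambda>c. (cmod (f c))\<^sup>2) summable_on CW W}"

definition l2norm :: "wtype \<Rightarrow> (vert \<Rightarrow> complex) \<Rightarrow> real" where
  "l2norm W f = sqrt (\<Sum>\<^sub>\<infinity>c\<in>CW W. (cmod (f c))\<^sup>2)"

definition bounded_linear_op :: "wtype \<Rightarrow> ((vert \<Rightarrow> complex) \<Rightarrow> (vert \<Rightarrow> complex)) \<Rightarrow> bool" where
  "bounded_linear_op W T \<longleftrightarrow>
     (\<forall>f\<in>l2 W. T f \<in> l2 W) \<and>
     (\<forall>f\<in>l2 W. \<forall>g\<in>l2 W. T (\<lambda>x. f x + g x) = (\<lambda>x. T f x + T g x)) \<and>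
     (\<forall>a. \<forall>f\<in>l2 W. T (\<lambda>x. a * f x) = (\<lambda>x. a * T f x)) \<and>
     (\<exists>K. \<forall>f\<in>l2 W. l2norm W (T f) \<le> K * l2norm W f)"

end

theory Submission
  imports Defs
begin

text \<open>Let \<open>A\<close> send a vector on \<open>C\<^sub>W\<^sub>,\<^sub>0\<close> to the vector on \<open>C\<^sub>W\<^sub>,\<^sub>1\<close> whose value at \<open>c\<close> is the
  sum of its values at the neighbours of \<open>c\<close>, and let \<open>A\<^sup>t\<close> be its transpose. Unfolding \<open>J\<^sub>W\<close>,
  the Coxeter element is \<open>\<epsilon> (I + A\<^sup>t)(I - A)\<close> with \<open>\<epsilon> = (-1)\<^sup>d\<^sup>-\<^sup>1\<close>. The graph has bounded
  degree, so \<open>A\<close> and \<open>A\<^sup>t\<close> are finite sums of operators \<open>f \<mapsto> f \<circ> p\<close> (restricted to a set on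
  which \<open>p\<close> is injective), hence bounded on \<open>\<ell>\<^sup>2\<close>. Since \<open>A\<close> and \<open>A\<^sup>t\<close> map into the part on
  which they vanish, \<open>A\<^sup>2 = (A\<^sup>t)\<^sup>2 = 0\<close>, so the same formula is bounded on \<open>\<ell>\<^sup>2\<close> with
  bounded inverse \<open>\<epsilon> (I + A)(I - A\<^sup>t)\<close>.\<close>

section \<open>Bounded operators on \<open>\<ell>\<^sup>2\<close>\<close>

definition l2sq :: "wtype \<Rightarrow> (vert \<Rightarrow> complex) \<Rightarrow> real" where
  "l2sq W f = (\<Sum>\<^sub>\<infinity>c\<in>CW W. (cmod (f c))\<^sup>2)"

text \<open>Bounds on squared norms compose and add without needing Minkowski's inequality.\<close>
definition l2_bounded :: "wtype \<Rightarrow> ((vert \<Rightarrow> complex) \<Rightarrow> (vert \<Rightarrow> complex)) \<Rightarrow> bool" where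
  "l2_bounded W T \<longleftrightarrow>
     (\<forall>f\<in>l2 W. T f \<in> l2 W) \<and>
     (\<forall>f\<in>l2 W. \<forall>g\<in>l2 W. T (\<lambda>x. f x + g x) = (\<lambda>x. T f x + T g x)) \<and>
     (\<forall>a. \<forall>f\<in>l2 W. T (\<lambda>x. a * f x) = (\<lambda>x. a * T f x)) \<and>
     (\<exists>K\<ge>0. \<forall>f\<in>l2 W. l2sq W (T f) \<le> K * l2sq W f)"

lemma l2_boundedI:
  assumes "\<And>f. f \<in> l2 W \<Longrightarrow> T f \<in> l2 W"
    and "\<And>f g. f \<in> l2 W \<Longrightarrow> g \<in> l2 W \<Longrightarrow> T (\<lambda>x. f x + g x) = (\<lambda>x. T f x + T g x)"
    and "\<And>a f. f \<in> l2 W \<Longrightarrow> T (\<lambda>x. a * f x) = (\<lambda>x. a * T f x)"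
    and "K \<ge> 0" "\<And>f. f \<in> l2 W \<Longrightarrow> l2sq W (T f) \<le> K * l2sq W f"
  shows "l2_bounded W T"
  unfolding l2_bounded_def using assms by blast

lemma l2_boundedD:
  assumes "l2_bounded W T"
  shows l2_bounded_maps: "\<And>f. f \<in> l2 W \<Longrightarrow> T f \<in> l2 W"
    and l2_bounded_add: "\<And>f g. f \<in> l2 W \<Longrightarrow> g \<in> l2 W \<Longrightarrow> T (\<lambda>x. f x + g x) = (\<lambda>x. T f x + T g x)"
    and l2_bounded_scale: "\<And>a f. f \<in> l2 W \<Longrightarrow> T (\<lambda>x. a * f x) = (\<lambda>x. a * T f x)"
    and l2_bounded_bound: "\<exists>K\<ge>0. \<forall>f\<in>l2 W. l2sq W (T f) \<le> K * l2sq W f"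
  using assms unfolding l2_bounded_def by blast+

lemma bounded_linear_op_if_l2_bounded:
  assumes T: "l2_bounded W T"
  shows "bounded_linear_op W T"
proof -
  obtain K where K: "K \<ge> 0" "\<forall>f\<in>l2 W. l2sq W (T f) \<le> K * l2sq W f"
    using l2_bounded_bound[OF T] by blast
  have "l2norm W (T f) \<le> sqrt K * l2norm W f" if "f \<in> l2 W" for f
  proof -
    have "sqrt (l2sq W (T f)) \<le> sqrt (K * l2sq W f)"
      using K that by (simp add: real_sqrt_le_mono)
    thus ?thesis unfolding l2norm_def l2sq_def by (simp add: real_sqrt_mult)
  qed
  thus ?thesis using T unfolding l2_bounded_def bounded_linear_op_def by blast
qed

lemma l2_iff: "f \<in> l2 W \<longleftrightarrow> supp f \<subseteq> CW W \<and> (\<lambda>c. (cmod (f c))\<^sup>2) summable_on UNIV"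
proof -
  have "(\<lambda>c. (cmod (f c))\<^sup>2) summable_on CW W \<longleftrightarrow> (\<lambda>c. (cmod (f c))\<^sup>2) summable_on UNIV"
    if "supp f \<subseteq> CW W"
    by (rule summable_on_cong_neutral) (use that in \<open>auto simp: supp_def\<close>)
  thus ?thesis unfolding l2_def by blast
qed

lemma l2sq_eq_infsum_UNIV: "supp f \<subseteq> CW W \<Longrightarrow> l2sq W f = (\<Sum>\<^sub>\<infinity>c. (cmod (f c))\<^sup>2)"
  unfolding l2sq_def by (rule infsum_cong_neutral) (auto simp: supp_def)

lemma cmod_add_squared_le: "(cmod (a + b))\<^sup>2 \<le> 2 * (cmod a)\<^sup>2 + 2 * (cmod b)\<^sup>2"
proof -
  have "(cmod (a + b))\<^sup>2 \<le> (cmod a + cmod b)\<^sup>2"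
    by (simp add: power_mono norm_triangle_ineq)
  also have "\<dots> \<le> 2 * (cmod a)\<^sup>2 + 2 * (cmod b)\<^sup>2"
    by (smt (verit) sum_squares_bound power2_sum)
  finally show ?thesis .
qed

lemma l2_add:
  assumes f: "f \<in> l2 W" and g: "g \<in> l2 W"
  shows "(\<lambda>x. f x + g x) \<in> l2 W"
    and "l2sq W (\<lambda>x. f x + g x) \<le> 2 * l2sq W f + 2 * l2sq W g"
proof -
  have sf: "(\<lambda>c. (cmod (f c))\<^sup>2) summable_on UNIV" "supp f \<subseteq> CW W" using f l2_iff by auto
  have sg: "(\<lambda>c. (cmod (g c))\<^sup>2) summable_on UNIV" "supp g \<subseteq> CW W" using g l2_iff by auto
  have majorant: "(\<lambda>c. 2 * (cmod (f c))\<^sup>2 + 2 * (cmod (g c))\<^sup>2) summable_on UNIV"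
    by (intro summable_on_add summable_on_cmult_right sf sg)
  have summable: "(\<lambda>c. (cmod (f c + g c))\<^sup>2) summable_on UNIV"
    by (rule summable_on_comparison_test[OF majorant]) (auto simp: cmod_add_squared_le)
  have "supp (\<lambda>x. f x + g x) \<subseteq> supp f \<union> supp g"
    by (auto simp: supp_def)
  hence supp: "supp (\<lambda>x. f x + g x) \<subseteq> CW W"
    using sf(2) sg(2) by blast
  show "(\<lambda>x. f x + g x) \<in> l2 W" using summable supp l2_iff by auto
  have "l2sq W (\<lambda>x. f x + g x) = (\<Sum>\<^sub>\<infinity>c. (cmod (f c + g c))\<^sup>2)"
    using supp by (simp add: l2sq_eq_infsum_UNIV)
  also have "\<dots> \<le> (\<Sum>\<^sub>\<infinity>c. 2 * (cmod (f c))\<^sup>2 + 2 * (cmod (g c))\<^sup>2)"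
    by (rule infsum_mono[OF summable majorant]) (simp add: cmod_add_squared_le)
  also have "\<dots> = 2 * l2sq W f + 2 * l2sq W g"
    using sf sg by (simp add: infsum_add summable_on_cmult_right infsum_cmult_right l2sq_eq_infsum_UNIV)
  finally show "l2sq W (\<lambda>x. f x + g x) \<le> 2 * l2sq W f + 2 * l2sq W g" .
qed

lemma l2_scale:
  assumes f: "f \<in> l2 W"
  shows "(\<lambda>x. a * f x) \<in> l2 W"
    and "l2sq W (\<lambda>x. a * f x) = (cmod a)\<^sup>2 * l2sq W f"
proof -
  have sf: "(\<lambda>c. (cmod (f c))\<^sup>2) summable_on UNIV" "supp f \<subseteq> CW W" using f l2_iff by auto
  have sq: "(\<lambda>c. (cmod (a * f c))\<^sup>2) = (\<lambda>c. (cmod a)\<^sup>2 * (cmod (f c))\<^sup>2)"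
    by (simp add: norm_mult power_mult_distrib)
  have supp: "supp (\<lambda>x. a * f x) \<subseteq> CW W" using sf by (auto simp: supp_def)
  show "(\<lambda>x. a * f x) \<in> l2 W" using supp sf l2_iff sq summable_on_cmult_right by metis
  show "l2sq W (\<lambda>x. a * f x) = (cmod a)\<^sup>2 * l2sq W f"
    using supp sf by (simp add: l2sq_eq_infsum_UNIV sq infsum_cmult_right)
qed

lemma l2_bounded_id: "l2_bounded W (\<lambda>f. f)"
  by (rule l2_boundedI[where K=1]) auto

lemma l2_bounded_comp:
  assumes T: "l2_bounded W T" and S: "l2_bounded W S"
  shows "l2_bounded W (\<lambda>f. T (S f))"
proof -
  obtain K1 where K1: "K1 \<ge> 0" "\<forall>f\<in>l2 W. l2sq W (T f) \<le> K1 * l2sq W f"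
    using l2_bounded_bound[OF T] by blast
  obtain K2 where K2: "K2 \<ge> 0" "\<forall>f\<in>l2 W. l2sq W (S f) \<le> K2 * l2sq W f"
    using l2_bounded_bound[OF S] by blast
  show ?thesis
  proof (rule l2_boundedI[where K = "K1 * K2"])
    fix f assume f: "f \<in> l2 W"
    hence Sf: "S f \<in> l2 W" by (rule l2_bounded_maps[OF S])
    thus "T (S f) \<in> l2 W" by (rule l2_bounded_maps[OF T])
    have "l2sq W (T (S f)) \<le> K1 * l2sq W (S f)" using K1 Sf by blast
    also have "\<dots> \<le> K1 * (K2 * l2sq W f)" using K2 f K1(1) by (simp add: mult_left_mono)
    finally show "l2sq W (T (S f)) \<le> (K1 * K2) * l2sq W f" by simp
  qed (use K1 K2 l2_boundedD[OF S] l2_boundedD[OF T] in simp_all)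
qed

lemma l2_bounded_plus:
  assumes T: "l2_bounded W T" and S: "l2_bounded W S"
  shows "l2_bounded W (\<lambda>f x. T f x + S f x)"
proof -
  obtain K1 where K1: "K1 \<ge> 0" "\<forall>f\<in>l2 W. l2sq W (T f) \<le> K1 * l2sq W f"
    using l2_bounded_bound[OF T] by blast
  obtain K2 where K2: "K2 \<ge> 0" "\<forall>f\<in>l2 W. l2sq W (S f) \<le> K2 * l2sq W f"
    using l2_bounded_bound[OF S] by blast
  show ?thesis
  proof (rule l2_boundedI[where K = "2 * K1 + 2 * K2"])
    fix f assume f: "f \<in> l2 W"
    have images: "T f \<in> l2 W" "S f \<in> l2 W"
      using l2_bounded_maps[OF T f] l2_bounded_maps[OF S f] .
    show "(\<lambda>x. T f x + S f x) \<in> l2 W" using l2_add(1)[OF images] .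
    have "l2sq W (\<lambda>x. T f x + S f x) \<le> 2 * l2sq W (T f) + 2 * l2sq W (S f)"
      using l2_add(2)[OF images] .
    also have "\<dots> \<le> 2 * (K1 * l2sq W f) + 2 * (K2 * l2sq W f)"
      using K1 K2 f by (intro add_mono) auto
    finally show "l2sq W (\<lambda>x. T f x + S f x) \<le> (2 * K1 + 2 * K2) * l2sq W f"
      by (simp add: algebra_simps)
  qed (use K1 K2 l2_bounded_add[OF T] l2_bounded_add[OF S] l2_bounded_scale[OF T]
         l2_bounded_scale[OF S] in \<open>simp_all add: algebra_simps\<close>)
qed

lemma l2_bounded_cmult:
  assumes T: "l2_bounded W T"
  shows "l2_bounded W (\<lambda>f x. a * T f x)"
proof -
  obtain K where K: "K \<ge> 0" "\<forall>f\<in>l2 W. l2sq W (T f) \<le> K * l2sq W f"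
    using l2_bounded_bound[OF T] by blast
  show ?thesis
  proof (rule l2_boundedI[where K = "(cmod a)\<^sup>2 * K"])
    fix f assume f: "f \<in> l2 W"
    have Tf: "T f \<in> l2 W" using l2_bounded_maps[OF T f] .
    show "(\<lambda>x. a * T f x) \<in> l2 W" using l2_scale(1)[OF Tf] .
    have "l2sq W (\<lambda>x. a * T f x) = (cmod a)\<^sup>2 * l2sq W (T f)" using l2_scale(2)[OF Tf] .
    also have "\<dots> \<le> (cmod a)\<^sup>2 * (K * l2sq W f)" using K f by (intro mult_left_mono) auto
    finally show "l2sq W (\<lambda>x. a * T f x) \<le> ((cmod a)\<^sup>2 * K) * l2sq W f" by simp
  qed (use K l2_bounded_add[OF T] l2_bounded_scale[OF T] in \<open>simp_all add: algebra_simps\<close>)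
qed

lemma l2_bounded_minus:
  assumes "l2_bounded W T" and "l2_bounded W S"
  shows "l2_bounded W (\<lambda>f x. T f x - S f x)"
  using l2_bounded_plus[OF assms(1) l2_bounded_cmult[OF assms(2), of "-1"]] by simp

definition pullback :: "vert set \<Rightarrow> (vert \<Rightarrow> vert) \<Rightarrow> (vert \<Rightarrow> complex) \<Rightarrow> vert \<Rightarrow> complex" where
  "pullback D p f x = (if x \<in> D then f (p x) else 0)"

lemma l2_bounded_pullback:
  assumes D: "D \<subseteq> CW W" and inj: "inj_on p D"
  shows "l2_bounded W (pullback D p)"
proof (rule l2_boundedI[where K=1])
  fix f assume f: "f \<in> l2 W"
  have sf: "(\<lambda>c. (cmod (f c))\<^sup>2) summable_on UNIV" "supp f \<subseteq> CW W" using f l2_iff by auto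
  have on_image: "(\<lambda>c. (cmod (f c))\<^sup>2) summable_on p ` D"
    using sf(1) summable_on_subset_banach by blast
  hence on_D: "(\<lambda>c. (cmod (f (p c)))\<^sup>2) summable_on D"
    using summable_on_reindex[OF inj, of "\<lambda>c. (cmod (f c))\<^sup>2"] by (simp add: o_def)
  have supp: "supp (pullback D p f) \<subseteq> CW W" using D by (auto simp: supp_def pullback_def)
  have "(\<lambda>c. (cmod (pullback D p f c))\<^sup>2) summable_on UNIV
          \<longleftrightarrow> (\<lambda>c. (cmod (f (p c)))\<^sup>2) summable_on D"
    by (rule summable_on_cong_neutral) (auto simp: pullback_def)
  thus "pullback D p f \<in> l2 W" using supp on_D l2_iff by blast
  have "l2sq W (pullback D p f) = (\<Sum>\<^sub>\<infinity>c\<in>D. (cmod (f (p c)))\<^sup>2)"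
    unfolding l2sq_eq_infsum_UNIV[OF supp] by (rule infsum_cong_neutral) (auto simp: pullback_def)
  also have "\<dots> = (\<Sum>\<^sub>\<infinity>c\<in>p ` D. (cmod (f c))\<^sup>2)"
    using infsum_reindex[OF inj, of "\<lambda>c. (cmod (f c))\<^sup>2"] by (simp add: o_def)
  also have "\<dots> \<le> (\<Sum>\<^sub>\<infinity>c. (cmod (f c))\<^sup>2)"
    by (rule infsum_mono_neutral[OF on_image sf(1)]) auto
  also have "\<dots> = l2sq W f" using l2sq_eq_infsum_UNIV[OF sf(2)] by simp
  finally show "l2sq W (pullback D p f) \<le> 1 * l2sq W f" by simp
qed (auto simp: pullback_def fun_eq_iff)

section \<open>Operators \<open>\<epsilon> (I + Q)(I - P)\<close> with \<open>P\<^sup>2 = Q\<^sup>2 = 0\<close>\<close>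

definition coxeter_form ::
    "'b::comm_ring_1 \<Rightarrow> (('a \<Rightarrow> 'b) \<Rightarrow> 'a \<Rightarrow> 'b) \<Rightarrow> (('a \<Rightarrow> 'b) \<Rightarrow> 'a \<Rightarrow> 'b) \<Rightarrow> ('a \<Rightarrow> 'b) \<Rightarrow> 'a \<Rightarrow> 'b"
  where "coxeter_form e P Q f x = e * (f x - P f x + Q (\<lambda>y. f y - P f y) x)"

lemma coxeter_form_inverse:
  fixes P Q :: "('a \<Rightarrow> 'b::comm_ring_1) \<Rightarrow> 'a \<Rightarrow> 'b"
  assumes e: "e * e = 1"
    and P_add: "\<And>f g x. P (\<lambda>y. f y + g y) x = P f x + P g x"
    and P_cmult: "\<And>a f x. P (\<lambda>y. a * f y) x = a * P f x"
    and P_nil: "\<And>f x. P (P f) x = 0"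
    and Q_add: "\<And>f g x. Q (\<lambda>y. f y + g y) x = Q f x + Q g x"
    and Q_cmult: "\<And>a f x. Q (\<lambda>y. a * f y) x = a * Q f x"
    and Q_nil: "\<And>f x. Q (Q f) x = 0"
  shows "coxeter_form e Q P (coxeter_form e P Q f) = f"
proof
  fix x
  define g where "g = (\<lambda>y. f y - P f y)"
  define F where "F = coxeter_form e P Q f"
  have F: "F = (\<lambda>y. e * (g y + Q g y))"
    by (simp add: fun_eq_iff F_def g_def coxeter_form_def)
  have "Q F y = e * Q g y" for y
    unfolding F Q_cmult Q_add Q_nil by simp
  hence F_minus_QF: "(\<lambda>y. F y - Q F y) = (\<lambda>y. e * g y)"
    by (simp add: fun_eq_iff F algebra_simps)
  have "P g x = P f x"
    using P_add[of f "\<lambda>y. -1 * P f y" x] P_cmult[of "-1" "P f" x] P_nil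
    by (simp add: g_def)
  hence "g x + P g x = f x" by (simp add: g_def)
  moreover have "coxeter_form e Q P F x = e * e * (g x + P g x)"
    unfolding coxeter_form_def F_minus_QF P_cmult using fun_cong[OF F_minus_QF, of x]
    by (simp add: algebra_simps)
  ultimately show "coxeter_form e Q P (coxeter_form e P Q f) x = f x"
    using e by (simp add: F_def)
qed

lemma l2_bounded_coxeter_form:
  assumes P: "l2_bounded W P" and Q: "l2_bounded W Q"
  shows "l2_bounded W (coxeter_form e P Q)"
proof -
  have "l2_bounded W (\<lambda>h y. h y - P h y)" by (intro l2_bounded_minus l2_bounded_id P)
  moreover have "l2_bounded W (\<lambda>g y. g y + Q g y)" by (intro l2_bounded_plus l2_bounded_id Q)
  ultimately show ?thesis
    using l2_bounded_cmult[OF l2_bounded_comp, of W "\<lambda>g y. g y + Q g y" "\<lambda>h y. h y - P h y" e]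
    unfolding coxeter_form_def[abs_def] by simp
qed

section \<open>The incidence operators\<close>

fun vindex :: "vert \<Rightarrow> nat" where
  "vindex (V0 n) = n"
| "vindex (V1 n) = n"
| "vindex _ = 0"

text \<open>The operators \<open>A\<close> and \<open>A\<^sup>t\<close> (see \<open>sum_nbr0_eq_incid\<close> and \<open>sum_nbr1_eq_incidT\<close>), written as
  sums of pullbacks along injective maps so that boundedness is evident.\<close>
definition incid :: "wtype \<Rightarrow> (vert \<Rightarrow> complex) \<Rightarrow> vert \<Rightarrow> complex" where
  "incid W f = (\<lambda>x.
       pullback (C1 W) (\<lambda>y. V0 (vindex y)) f x
     + pullback {V1 m | m. m \<ge> 2} (\<lambda>y. V0 (vindex y - 1)) f x
     + pullback (if W = TypeD then {V1 1} else {}) (\<lambda>_. Pl) f x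
     + pullback (if W = TypeD then {V1 1} else {}) (\<lambda>_. Mi) f x)"

definition incidT :: "wtype \<Rightarrow> (vert \<Rightarrow> complex) \<Rightarrow> vert \<Rightarrow> complex" where
  "incidT W f = (\<lambda>x.
       pullback {V0 n | n. n \<ge> 1} (\<lambda>y. V1 (vindex y)) f x
     + pullback {V0 n | n. n \<ge> 1} (\<lambda>y. V1 (vindex y + 1)) f x
     + pullback (C0 W \<inter> {Pl}) (\<lambda>_. V1 1) f x
     + pullback (C0 W \<inter> {Mi}) (\<lambda>_. V1 1) f x)"

lemma l2_bounded_incid: "l2_bounded W (incid W)"
  unfolding incid_def
  by (intro l2_bounded_plus l2_bounded_pullback) (auto simp: CW_def C1_def inj_on_def)

lemma l2_bounded_incidT: "l2_bounded W (incidT W)"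
  unfolding incidT_def
  by (intro l2_bounded_plus l2_bounded_pullback) (auto simp: CW_def C0_def inj_on_def)

lemma incid_outside: "x \<notin> C1 W \<Longrightarrow> incid W f x = 0"
  by (auto simp: incid_def pullback_def C1_def)

lemma incidT_outside: "x \<notin> C0 W \<Longrightarrow> incidT W f x = 0"
  by (auto simp: incidT_def pullback_def C0_def)

lemma incid_incid: "incid W (incid W f) x = 0"
  by (cases x) (auto simp: incid_def pullback_def C1_def)

lemma incidT_incidT: "incidT W (incidT W f) x = 0"
  by (cases x) (auto simp: incidT_def pullback_def C0_def)

lemma pullback_add: "pullback D p (\<lambda>x. f x + g x) y = pullback D p f y + pullback D p g y"
  and pullback_diff: "pullback D p (\<lambda>x. f x - g x) y = pullback D p f y - pullback D p g y"
  and pullback_cmult: "pullback D p (\<lambda>x. a * f x) y = a * pullback D p f y"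
  by (simp_all add: pullback_def)

lemma incid_add: "incid W (\<lambda>x. f x + g x) y = incid W f y + incid W g y"
  and incid_cmult: "incid W (\<lambda>x. a * f x) y = a * incid W f y"
  by (simp_all add: incid_def pullback_add pullback_cmult algebra_simps)

lemma incidT_add: "incidT W (\<lambda>x. f x + g x) y = incidT W f y + incidT W g y"
  and incidT_diff: "incidT W (\<lambda>x. f x - g x) y = incidT W f y - incidT W g y"
  and incidT_cmult: "incidT W (\<lambda>x. a * f x) y = a * incidT W f y"
  by (simp_all add: incidT_def pullback_add pullback_diff pullback_cmult algebra_simps)

definition nbr0 :: "wtype \<Rightarrow> vert \<Rightarrow> vert set" where
  "nbr0 W c = {e \<in> C0 W. adj e c}"

definition nbr1 :: "wtype \<Rightarrow> vert \<Rightarrow> vert set" where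
  "nbr1 W e = {c \<in> C1 W. adj e c}"

lemma C0_not_C1: "c \<in> C0 W \<Longrightarrow> c \<notin> C1 W"
  by (auto simp: C0_def C1_def split: if_splits)

lemma finite_nbr0: "finite (nbr0 W c)"
proof -
  have "nbr0 W c \<subseteq> {V0 (vindex c), V0 (vindex c - 1), Pl, Mi}"
    by (auto simp: nbr0_def elim!: adj.elims)
  thus ?thesis using finite_subset by blast
qed

lemma finite_nbr1: "finite (nbr1 W e)"
proof -
  have "nbr1 W e \<subseteq> {V1 (vindex e), V1 (vindex e + 1), V1 1}"
    by (auto simp: nbr1_def elim!: adj.elims)
  thus ?thesis using finite_subset by blast
qed

lemma sum_nbr0_eq_incid:
  assumes "c \<in> C1 W"
  shows "(\<Sum>e\<in>nbr0 W c. f e) = incid W f c"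
proof -
  obtain m where m: "c = V1 m" "m \<ge> 1" using assms by (auto simp: C1_def)
  have nbr0: "e \<in> nbr0 W c \<longleftrightarrow> e = V0 m \<or> (e = V0 (m - 1) \<and> m \<ge> 2)
                              \<or> ((e = Pl \<or> e = Mi) \<and> m = 1 \<and> W = TypeD)" for e
    using m by (cases e) (auto simp: nbr0_def C0_def)
  consider "m = 1" "W = TypeA" | "m = 1" "W = TypeD" | "m \<ge> 2"
    using m(2) by (cases W) force+
  thus ?thesis
  proof cases
    case 1
    have "nbr0 W c = {V0 1}" unfolding set_eq_iff nbr0 using m 1 by auto
    thus ?thesis using m 1 by (simp add: incid_def pullback_def C1_def)
  next
    case 2
    have "nbr0 W c = {V0 1, Pl, Mi}" unfolding set_eq_iff nbr0 using m 2 by auto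
    thus ?thesis using m 2 by (simp add: incid_def pullback_def C1_def)
  next
    case 3
    have "nbr0 W c = {V0 m, V0 (m - 1)}" unfolding set_eq_iff nbr0 using m 3 by auto
    thus ?thesis using m 3 by (simp add: incid_def pullback_def C1_def)
  qed
qed

lemma sum_nbr1_eq_incidT:
  assumes "e \<in> C0 W"
  shows "(\<Sum>c\<in>nbr1 W e. f c) = incidT W f e"
proof -
  consider n where "e = V0 n" "n \<ge> 1" | "e = Pl" "W = TypeD" | "e = Mi" "W = TypeD"
    using assms by (auto simp: C0_def split: if_splits)
  thus ?thesis
  proof cases
    case 1
    hence "nbr1 W e = {V1 n, V1 (n + 1)}" by (auto simp: nbr1_def C1_def elim!: adj.elims)
    thus ?thesis using 1 by (auto simp: incidT_def pullback_def)
  next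
    case 2
    hence "nbr1 W e = {V1 1}" by (auto simp: nbr1_def C1_def elim!: adj.elims)
    thus ?thesis using 2 assms by (auto simp: incidT_def pullback_def)
  next
    case 3
    hence "nbr1 W e = {V1 1}" by (auto simp: nbr1_def C1_def elim!: adj.elims)
    thus ?thesis using 3 assms by (auto simp: incidT_def pullback_def)
  qed
qed

lemma finite_supp_incid:
  assumes "finite (supp f)"
  shows "finite (supp (incid W f))"
proof -
  have "supp (incid W f) \<subseteq> (\<Union>e\<in>supp f. nbr1 W e)"
  proof
    fix c assume "c \<in> supp (incid W f)"
    hence c: "incid W f c \<noteq> 0" by (simp add: supp_def)
    hence c1: "c \<in> C1 W" using incid_outside by blast
    hence "(\<Sum>e\<in>nbr0 W c. f e) \<noteq> 0" using c sum_nbr0_eq_incid by simp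
    then obtain e where "e \<in> nbr0 W c" "f e \<noteq> 0" by (meson sum.neutral)
    thus "c \<in> (\<Union>e\<in>supp f. nbr1 W e)" using c1 by (auto simp: supp_def nbr0_def nbr1_def)
  qed
  thus ?thesis using assms finite_nbr1 finite_subset by blast
qed

lemma finite_supp_incidT:
  assumes "finite (supp f)"
  shows "finite (supp (incidT W f))"
proof -
  have "supp (incidT W f) \<subseteq> (\<Union>c\<in>supp f. nbr0 W c)"
  proof
    fix e assume "e \<in> supp (incidT W f)"
    hence e: "incidT W f e \<noteq> 0" by (simp add: supp_def)
    hence e0: "e \<in> C0 W" using incidT_outside by blast
    hence "(\<Sum>c\<in>nbr1 W e. f c) \<noteq> 0" using e sum_nbr1_eq_incidT by simp
    then obtain c where "c \<in> nbr1 W e" "f c \<noteq> 0" by (meson sum.neutral)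
    thus "e \<in> (\<Union>c\<in>supp f. nbr0 W c)" using e0 by (auto simp: supp_def nbr0_def nbr1_def)
  qed
  thus ?thesis using assms finite_nbr0 finite_subset by blast
qed

section \<open>The Coxeter element in terms of the incidence operators\<close>

lemma supp_gam: "supp (gam c) = {c}"
  by (auto simp: supp_def gam_def)

lemma JW_gam_right: "JW W u (gam c) = (\<Sum>e\<in>supp u. u e * Jb W e c)"
  unfolding JW_def supp_gam by (simp add: gam_def)

lemma JW_gam_left: "JW W (gam e) v = (\<Sum>c\<in>supp v. v c * Jb W e c)"
  unfolding JW_def supp_gam by (simp add: gam_def)

lemma JW_gam_gam: "e \<in> C0 W \<Longrightarrow> c \<in> C1 W \<Longrightarrow> JW W (gam e) (gam c) = (if adj e c then -1 else 0)"
  using C0_not_C1[of e W] unfolding JW_gam_right supp_gam by (auto simp: gam_def Jb_def)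

lemma JW_restr_C0_gam:
  assumes u: "finite (supp u)" and c: "c \<in> C1 W"
  shows "JW W (restr (C0 W) u) (gam c) = - incid W u c"
proof -
  let ?u0 = "restr (C0 W) u"
  have "finite (supp ?u0)" using u by (rule finite_subset[rotated]) (auto simp: supp_def restr_def)
  hence "JW W ?u0 (gam c) = (\<Sum>e\<in>nbr0 W c. ?u0 e * Jb W e c)"
    unfolding JW_gam_right using C0_not_C1 c
    by (intro sum.mono_neutral_cong finite_nbr0)
       (auto simp: supp_def restr_def nbr0_def Jb_def split: if_splits)
  also have "\<dots> = (\<Sum>e\<in>nbr0 W c. - u e)"
    using C0_not_C1 c by (intro sum.cong) (auto simp: nbr0_def restr_def Jb_def)
  also have "\<dots> = - incid W u c" using sum_nbr0_eq_incid[OF c] by (simp add: sum_negf)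
  finally show ?thesis .
qed

lemma JW_gam_restr_C1:
  assumes u: "finite (supp u)" and e: "e \<in> C0 W"
  shows "JW W (gam e) (restr (C1 W) u) = - incidT W u e"
proof -
  let ?u1 = "restr (C1 W) u"
  have "finite (supp ?u1)" using u by (rule finite_subset[rotated]) (auto simp: supp_def restr_def)
  hence "JW W (gam e) ?u1 = (\<Sum>c\<in>nbr1 W e. ?u1 c * Jb W e c)"
    unfolding JW_gam_left using C0_not_C1 e
    by (intro sum.mono_neutral_cong finite_nbr1) (auto simp: supp_def restr_def nbr1_def Jb_def)
  also have "\<dots> = (\<Sum>c\<in>nbr1 W e. - u c)"
    using C0_not_C1 e by (intro sum.cong) (auto simp: nbr1_def restr_def Jb_def)
  also have "\<dots> = - incidT W u e" using sum_nbr1_eq_incidT[OF e] by (simp add: sum_negf)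
  finally show ?thesis .
qed

lemma vsum_gam: "finite F \<Longrightarrow> vsum F (\<lambda>c y. b c * gam c y) x = (if x \<in> F then b x else 0)"
  by (simp add: vsum_def gam_def if_distrib cong: if_cong)

lemma Cox1_restr_eq:
  assumes u: "finite (supp u)"
  shows "Cox1 W d (restr (C1 W) u) x = (-1)^(d-1) * (restr (C1 W) u x + incidT W u x)"
proof -
  let ?F = "{e \<in> C0 W. JW W (gam e) (restr (C1 W) u) \<noteq> 0}"
  have "?F \<subseteq> supp (incidT W u)" using JW_gam_restr_C1[OF u] by (auto simp: supp_def)
  hence F: "finite ?F" using finite_supp_incidT[OF u] finite_subset by blast
  have "vsum ?F (\<lambda>e y. JW W (gam e) (restr (C1 W) u) * gam e y) x = - incidT W u x"
    unfolding vsum_gam[OF F] using JW_gam_restr_C1[OF u] incidT_outside by (cases "x \<in> C0 W") auto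
  thus ?thesis unfolding Cox1_def by simp
qed

lemma Cox0_restr_eq:
  assumes u: "finite (supp u)"
  shows "Cox0 W d (restr (C0 W) u) x
           = (-1)^(d-1) * (restr (C0 W) u x - incid W u x - incidT W (incid W u) x)"
proof -
  let ?a = "\<lambda>c. JW W (restr (C0 W) u) (gam c)"
  let ?F = "{c \<in> C1 W. ?a c \<noteq> 0}"
  let ?G = "\<lambda>c. {e \<in> C0 W. JW W (gam e) (gam c) \<noteq> 0}"
  have F_eq: "?F = C1 W \<inter> supp (incid W u)" using JW_restr_C0_gam[OF u] by (auto simp: supp_def)
  hence F: "finite ?F" using finite_supp_incid[OF u] by simp
  have first: "vsum ?F (\<lambda>c y. ?a c * gam c y) x = - incid W u x"
    unfolding vsum_gam[OF F] using JW_restr_C0_gam[OF u] incid_outside by (cases "x \<in> C1 W") auto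
  have G: "?G c = nbr0 W c" if "c \<in> C1 W" for c
    using JW_gam_gam[OF _ that] by (auto simp: nbr0_def split: if_splits)
  have inner: "vsum (?G c) (\<lambda>e y. ?a c * JW W (gam e) (gam c) * gam e y) x
                 = (if x \<in> nbr0 W c then incid W u c else 0)" if "c \<in> C1 W" for c
    unfolding G[OF that] vsum_gam[OF finite_nbr0]
    using JW_gam_gam[OF _ that] JW_restr_C0_gam[OF u that] by (auto simp: nbr0_def)
  have "vsum ?F (\<lambda>c. vsum (?G c) (\<lambda>e y. ?a c * JW W (gam e) (gam c) * gam e y)) x
          = (\<Sum>c\<in>?F. if x \<in> nbr0 W c then incid W u c else 0)"
    unfolding vsum_def[of ?F] by (rule sum.cong) (use inner in auto)
  also have "\<dots> = incidT W (incid W u) x"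
  proof (cases "x \<in> C0 W")
    case True
    have "(\<Sum>c\<in>?F. if x \<in> nbr0 W c then incid W u c else 0) = (\<Sum>c\<in>nbr1 W x. incid W u c)"
      using True unfolding F_eq
      by (intro sum.mono_neutral_cong F[unfolded F_eq] finite_nbr1)
         (auto simp: nbr0_def nbr1_def supp_def)
    thus ?thesis using sum_nbr1_eq_incidT[OF True] by simp
  qed (simp add: incidT_outside nbr0_def)
  finally show ?thesis unfolding Cox0_def using first by simp
qed

lemma Cox_eq_coxeter_form:
  assumes u: "u \<in> HW W"
  shows "Cox W d u = coxeter_form ((-1)^(d-1)) (incid W) (incidT W) u"
proof
  fix x
  have fin: "finite (supp u)" and supp: "supp u \<subseteq> CW W" using u by (auto simp: HW_def)
  have "u x = restr (C0 W) u x + restr (C1 W) u x"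
    using supp C0_not_C1[of x W] by (cases "u x = 0") (auto simp: restr_def supp_def CW_def)
  thus "Cox W d u x = coxeter_form ((-1)^(d-1)) (incid W) (incidT W) u x"
    unfolding Cox_def Cox0_restr_eq[OF fin] Cox1_restr_eq[OF fin] coxeter_form_def incidT_diff
    by (simp add: algebra_simps)
qed

theorem mainTheorem8:
  fixes W :: wtype and d :: nat
  assumes "d \<ge> 1"
  shows "\<exists>T S. (\<forall>u\<in>HW W. T u = Cox W d u)
           \<and> bounded_linear_op W T \<and> bounded_linear_op W S
           \<and> (\<forall>f\<in>l2 W. S (T f) = f \<and> T (S f) = f)"
proof -
  define e :: complex where "e = (-1)^(d-1)"
  have e: "e * e = 1" by (simp add: e_def flip: power_add)
  show ?thesis
  proof (intro exI conjI ballI)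
    show "coxeter_form e (incid W) (incidT W) u = Cox W d u" if "u \<in> HW W" for u
      using Cox_eq_coxeter_form[OF that] by (simp add: e_def)
    show "bounded_linear_op W (coxeter_form e (incid W) (incidT W))"
      "bounded_linear_op W (coxeter_form e (incidT W) (incid W))"
      by (intro bounded_linear_op_if_l2_bounded l2_bounded_coxeter_form
          l2_bounded_incid l2_bounded_incidT)+
    show "coxeter_form e (incidT W) (incid W) (coxeter_form e (incid W) (incidT W) f) = f"
      "coxeter_form e (incid W) (incidT W) (coxeter_form e (incidT W) (incid W) f) = f" for f
      by (intro coxeter_form_inverse e incid_add incid_cmult incid_incid
          incidT_add incidT_cmult incidT_incidT)+
  qed
qed

end
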